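(* Fix $\theta$ and $Q\in\{0,1\}$. The function $\tau\mapsto u(s_1(\theta,\tau))$ has a discontinuity in $(-x_u,x_q)$ if and only if $\phi(\theta)<\beta$. The function $\tau\mapsto u(s_2(\theta,\tau))$ has a discontinuity in $(-x_u,x_q)$ for every $\theta$.
   Context: Setup. Let $Q\in\{0,1\}$ be a random variable with $\mathbb P(Q=1)=\pi\in(0,1)$, and let $(\Theta,\Gamma)$ be a real-valued random vector whose conditional joint density given $Q=1$ is $h_q$ and given $Q=0$ is $h_u$, both strictly positive on $\mathbb R^2$. Monotone likelihood ratio assumption: $l(\theta,\gamma)=h_q(\theta,\gamma)/h_u(\theta,\gamma)$ is continuous and strictly increasing in each of $\theta$ and $\gamma$, and for each $\theta$ the map $\gamma\mapsto l(\theta,\gamma)$ has infimum $0$ and supremum $+\infty$. Fix payoffs $x_q>0$, $x_u>0$. For $\tau\in(-x_u,x_q)$ let $A(\tau)=\mathbb 1\{l(\Theta,\Gamma)>\frac{(1-\pi)(x_u+\tau)}{\pi(x_q-\tau)}\}$, $s_1(\theta,\tau)=\mathbb E[Q\mid\Theta=\theta,A(\tau)=1]$, $s_2(\theta,\tau)=\mathbb E[A(\tau)\mid\Theta=\theta]$, $\phi(\theta)=\mathbb P(Q=1\mid\Theta=\theta)$. Regret. Fix a cutoff $c\in(-x_u,x_q)$ and let $\beta=(x_u+c)/(x_q+x_u)\in(0,1)$. For a score value $s\in[0,1]$ and a qualification value $Q\in\{0,1\}$ define $\mathcal N(s)=sx_q-(1-s)x_u$, $A'(s)=\mathbb 1\{\mathcal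 N(s)>c\}$ (i.e. $s>\beta$), $\mathcal P(s)=A'(s)(Qx_q-(1-Q)x_u)$, and the individual regret $u(s)=\mathcal N(s)-\mathcal P(s)$. For a fixed applicant $(\theta,Q)$, $u(s_k(\theta,\tau))$ is viewed as a function of $\tau\in(-x_u,x_q)$. *)

theory Defs
  imports "HOL-Analysis.Analysis"
begin

definition lr :: "(real \<times> real \<Rightarrow> real) \<Rightarrow> (real \<times> real \<Rightarrow> real) \<Rightarrow> real \<times> real \<Rightarrow> real" where
  "lr hq hu p = hq p / hu p"

text \<open>Acceptance threshold on the likelihood ratio for the policy A(tau).\<close>
definition thr :: "real \<Rightarrow> real \<Rightarrow> real \<Rightarrow> real \<Rightarrow> real" where
  "thr pq xq xu t = (1 - pq) * (xu + t) / (pq * (xq - t))"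

definition acc_mass :: "(real \<times> real \<Rightarrow> real) \<Rightarrow> (real \<times> real \<Rightarrow> real) \<Rightarrow> real \<Rightarrow> real \<Rightarrow> real" where
  "acc_mass h l k theta = (\<integral>g. indicator {g. l (theta, g) > k} g * h (theta, g) \<partial>lborel)"

definition marg :: "(real \<times> real \<Rightarrow> real) \<Rightarrow> real \<Rightarrow> real" where
  "marg h theta = (\<integral>g. h (theta, g) \<partial>lborel)"

text \<open>phi(theta) = P(Q = 1 | Theta = theta), by Bayes' rule.\<close>
definition phi :: "real \<Rightarrow> (real \<times> real \<Rightarrow> real) \<Rightarrow> (real \<times> real \<Rightarrow> real) \<Rightarrow> real \<Rightarrow> real" where
  "phi pq hq hu theta = pq * marg hq theta / (pq * marg hq theta + (1 - pq) * marg hu theta)"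

text \<open>s_1(theta,tau) = E[Q | Theta = theta, A(tau) = 1].\<close>
definition s1 :: "real \<Rightarrow> (real \<times> real \<Rightarrow> real) \<Rightarrow> (real \<times> real \<Rightarrow> real) \<Rightarrow> real \<Rightarrow> real \<Rightarrow> real \<Rightarrow> real \<Rightarrow> real" where
  "s1 pq hq hu xq xu theta t =
     (let k = thr pq xq xu t;
          a = pq * acc_mass hq (lr hq hu) k theta;
          b = (1 - pq) * acc_mass hu (lr hq hu) k theta
      in a / (a + b))"

text \<open>s_2(theta,tau) = E[A(tau) | Theta = theta].\<close>
definition s2 :: "real \<Rightarrow> (real \<times> real \<Rightarrow> real) \<Rightarrow> (real \<times> real \<Rightarrow> real) \<Rightarrow> real \<Rightarrow> real \<Rightarrow> real \<Rightarrow> real \<Rightarrow> real" where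
  "s2 pq hq hu xq xu theta t =
     (let k = thr pq xq xu t;
          a = pq * acc_mass hq (lr hq hu) k theta;
          b = (1 - pq) * acc_mass hu (lr hq hu) k theta
      in (a + b) / (pq * marg hq theta + (1 - pq) * marg hu theta))"

definition beta :: "real \<Rightarrow> real \<Rightarrow> real \<Rightarrow> real" where
  "beta xq xu c = (xu + c) / (xq + xu)"

definition netv :: "real \<Rightarrow> real \<Rightarrow> real \<Rightarrow> real" where
  "netv xq xu s = s * xq - (1 - s) * xu"

definition accept' :: "real \<Rightarrow> real \<Rightarrow> real \<Rightarrow> real \<Rightarrow> real" where
  "accept' xq xu c s = (if netv xq xu s > c then 1 else 0)"

definition payoff :: "real \<Rightarrow> real \<Rightarrow> real \<Rightarrow> real \<Rightarrow> real \<Rightarrow> real" where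
  "payoff xq xu c Q s = accept' xq xu c s * (Q * xq - (1 - Q) * xu)"

definition regret :: "real \<Rightarrow> real \<Rightarrow> real \<Rightarrow> real \<Rightarrow> real \<Rightarrow> real" where
  "regret xq xu c Q s = netv xq xu s - payoff xq xu c Q s"

end

theory Submission
  imports Defs
begin

text \<open>
  The policy A(\<tau>) accepts when the likelihood ratio exceeds the threshold
  k = thr \<tau>, which runs from 0 to \<infinity> as \<tau> runs through (-x_u, x_q); both scores
  are continuous in \<tau>. The regret u(s) = N(s) - P(s) is N(s) minus a step of nonzero
  height at s = \<beta>, so u \<circ> s jumps at a point where s \<le> \<beta> is approached by points
  with s > \<beta>; such a point exists as soon as s takes values on both sides of \<beta>.

  Conditioning on acceptance raises the posterior: s_1 exceeds both \<phi>(\<theta>) and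
  pk/(pk + 1 - p), and the latter equals \<beta> at \<tau> = c. As \<tau> \<rightarrow> -x_u, s_1 tends to
  \<phi>(\<theta>). So s_1 crosses \<beta> iff \<phi>(\<theta>) < \<beta>, and otherwise stays above \<beta>, where u is
  continuous. The acceptance probability s_2 tends to 1 at -x_u and to 0 at x_q, hence
  crosses \<beta> \<in> (0,1) in every case.
\<close>

lemma divide_add_less_divide_add_iff:
  fixes a b c d :: real
  assumes "0 < a" "0 < b" "0 < c" "0 < d"
  shows "a / (a + b) < c / (c + d) \<longleftrightarrow> a * d < c * b"
  using assms by (simp add: field_simps)

lemma set_integral_pos:
  fixes f :: "'a \<Rightarrow> real"
  assumes f: "set_integrable M A f" and A: "A \<in> sets M"
    and pos: "\<And>x. x \<in> A \<Longrightarrow> 0 < f x" and nonnull: "emeasure M A \<noteq> 0"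
  shows "0 < (LINT x:A|M. f x)"
proof -
  have int: "integrable M (\<lambda>x. indicator A x * f x)"
    using f by (simp add: set_integrable_def)
  have nonneg: "AE x in M. 0 \<le> indicator A x * f x"
    using pos by (auto simp: indicator_def less_imp_le)
  have "\<not> (AE x in M. indicator A x * f x = 0)"
  proof
    assume "AE x in M. indicator A x * f x = 0"
    then have "AE x in M. x \<notin> A"
      by eventually_elim (use pos in \<open>force simp: indicator_def\<close>)
    moreover have "{x \<in> space M. x \<in> A} = A"
      using sets.sets_into_space[OF A] by auto
    ultimately show False
      using nonnull A by (simp add: AE_iff_measurable[OF _ refl])
  qed
  then have "(LINT x:A|M. f x) \<noteq> 0"
    using integral_nonneg_eq_0_iff_AE[OF int nonneg] by (simp add: set_lebesgue_integral_def)
  moreover have "0 \<le> (LINT x:A|M. f x)"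
    using nonneg by (simp add: set_lebesgue_integral_def integral_nonneg_AE)
  ultimately show ?thesis by simp
qed

lemma connected_superlevel_set_closure_point:
  fixes g :: "'a::topological_space \<Rightarrow> real"
  assumes S: "connected S" and g: "continuous_on S g"
    and a: "a \<in> S" "B < g a" and b: "b \<in> S" "g b \<le> B"
  obtains t where "t \<in> S" "g t \<le> B" "t \<in> closure {x \<in> S. B < g x}"
proof -
  let ?U = "{x \<in> S. B < g x}"
  have "openin (top_of_set S) ?U"
    using continuous_openin_preimage_gen[OF g open_greaterThan, of B] by (simp add: Int_def)
  moreover have "a \<in> ?U" "b \<in> S - ?U"
    using a b by auto
  ultimately have "\<not> closedin (top_of_set S) ?U"
    using S \<open>openin (top_of_set S) ?U\<close> unfolding connected_clopen by blast
  moreover have "?U = S \<inter> closure ?U" if "S \<inter> closure ?U \<subseteq> ?U"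
    using that closure_subset[of ?U] by blast
  ultimately have "\<not> S \<inter> closure ?U \<subseteq> ?U"
    using closedin_closed_Int[OF closed_closure, of S ?U] by auto
  then show ?thesis
    using that not_less by blast
qed

section \<open>Regret along a continuous score\<close>

lemma netv_greater_iff:
  assumes "0 < xq + xu"
  shows "c < netv xq xu s \<longleftrightarrow> beta xq xu c < s"
  using assms by (simp add: netv_def beta_def divide_less_eq algebra_simps)

lemma regret_eq:
  assumes "0 < xq + xu"
  shows "regret xq xu c Q s
    = netv xq xu s - (if beta xq xu c < s then Q * xq - (1 - Q) * xu else 0)"
  using netv_greater_iff[OF assms] by (simp add: regret_def payoff_def accept'_def)

lemma isCont_regret_comp:
  fixes s :: "real \<Rightarrow> real"
  assumes xqu: "0 < xq + xu" and s: "isCont s t" and ne: "s t \<noteq> beta xq xu c"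
  shows "isCont (\<lambda>x. regret xq xu c Q (s x)) t"
proof -
  have "\<forall>\<^sub>F x in nhds t. (beta xq xu c < s x) = (beta xq xu c < s t)"
  proof (cases "beta xq xu c < s t")
    case True
    then show ?thesis
      using order_tendstoD(1)[OF s[unfolded isCont_def tendsto_at_iff_tendsto_nhds]] by simp
  next
    case False
    with ne have "s t < beta xq xu c" by simp
    then show ?thesis
      using order_tendstoD(2)[OF s[unfolded isCont_def tendsto_at_iff_tendsto_nhds]]
      by (fastforce elim: eventually_mono)
  qed
  then have ev: "\<forall>\<^sub>F x in nhds t. regret xq xu c Q (s x) = netv xq xu (s x)
      - (if beta xq xu c < s t then Q * xq - (1 - Q) * xu else 0)"
    by eventually_elim (simp add: regret_eq[OF xqu])
  have "isCont (\<lambda>x. netv xq xu (s x)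
      - (if beta xq xu c < s t then Q * xq - (1 - Q) * xu else 0)) t"
    unfolding netv_def using s by (intro continuous_intros)
  then show ?thesis
    using isCont_cong[OF ev] by simp
qed

lemma not_isCont_regret_comp:
  fixes s :: "real \<Rightarrow> real"
  assumes xq: "0 < xq" and xu: "0 < xu" and Q: "Q = 0 \<or> Q = 1"
    and s: "isCont s t" and le: "s t \<le> beta xq xu c"
    and cl: "t \<in> closure {x. beta xq xu c < s x}"
  shows "\<not> isCont (\<lambda>x. regret xq xu c Q (s x)) t"
proof
  define D where "D = Q * xq - (1 - Q) * xu"
  define P where "P x = (if beta xq xu c < s x then D else 0)" for x
  assume "isCont (\<lambda>x. regret xq xu c Q (s x)) t"
  then have "isCont (\<lambda>x. netv xq xu (s x) - regret xq xu c Q (s x)) t"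
    unfolding netv_def using s by (intro continuous_intros)
  moreover have "(\<lambda>x. netv xq xu (s x) - regret xq xu c Q (s x)) = P"
    using xq xu by (simp add: fun_eq_iff regret_eq P_def D_def)
  ultimately have P: "isCont P t" by simp
  obtain y where y: "\<And>n. beta xq xu c < s (y n)" "y \<longlonglongrightarrow> t"
    using cl unfolding closure_sequential by auto
  have "(\<lambda>n. P (y n)) \<longlonglongrightarrow> P t"
    using isCont_tendsto_compose[OF P y(2)] .
  then have "(\<lambda>n. D) \<longlonglongrightarrow> 0"
    using y(1) le by (simp add: P_def)
  then have "D = 0"
    using LIMSEQ_const_iff by blast
  with Q xq xu show False
    by (auto simp: D_def)
qed

lemma exists_not_isCont_regret_comp:
  fixes s :: "real \<Rightarrow> real"
  assumes "0 < xq" "0 < xu" "Q = 0 \<or> Q = 1" and S: "connected S"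
    and s: "\<forall>t\<in>S. isCont s t"
    and a: "a \<in> S" "beta xq xu c < s a" and b: "b \<in> S" "s b \<le> beta xq xu c"
  shows "\<exists>t\<in>S. \<not> isCont (\<lambda>x. regret xq xu c Q (s x)) t"
proof -
  obtain t where t: "t \<in> S" "s t \<le> beta xq xu c" "t \<in> closure {x \<in> S. beta xq xu c < s x}"
    using connected_superlevel_set_closure_point[OF S continuous_at_imp_continuous_on[OF s] a b] .
  have "t \<in> closure {x. beta xq xu c < s x}"
    using t(3) closure_mono[of "{x \<in> S. beta xq xu c < s x}" "{x. beta xq xu c < s x}"] by auto
  then show ?thesis
    using not_isCont_regret_comp[OF assms(1-3)] s t(1,2) by blast
qed

section \<open>The likelihood-ratio threshold\<close>

lemma thr_pos:
  assumes "0 < pq" "pq < 1" "- xu < t" "t < xq"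
  shows "0 < thr pq xq xu t"
  using assms by (simp add: thr_def)

lemma thr_left_endpoint: "thr pq xq xu (- xu) = 0"
  by (simp add: thr_def)

lemma isCont_thr:
  assumes "pq \<noteq> 0" "t \<noteq> xq"
  shows "isCont (thr pq xq xu) t"
  unfolding thr_def[abs_def] using assms by (intro continuous_intros) simp

lemma filterlim_thr_at_left:
  assumes "0 < pq" "pq < 1" "- xu < xq"
  shows "filterlim (thr pq xq xu) at_top (at_left xq)"
  unfolding thr_def[abs_def]
proof (rule LIM_at_top_divide)
  show "((\<lambda>t. (1 - pq) * (xu + t)) \<longlongrightarrow> (1 - pq) * (xu + xq)) (at_left xq)"
    by (intro tendsto_intros)
  show "((\<lambda>t. pq * (xq - t)) \<longlongrightarrow> 0) (at_left xq)"
    by (rule tendsto_eq_intros) (auto intro!: tendsto_eq_intros)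
  show "\<forall>\<^sub>F t in at_left xq. 0 < pq * (xq - t)"
    using assms by (auto simp: eventually_at_left_field intro: exI[of _ "xq - 1"])
qed (use assms in auto)

lemma odds_thr:
  assumes "0 < pq" "pq < 1" "t < xq" "0 < xq + xu"
  shows "pq * thr pq xq xu t / (pq * thr pq xq xu t + (1 - pq)) = (xu + t) / (xq + xu)"
proof -
  have num: "pq * thr pq xq xu t = (1 - pq) * (xu + t) / (xq - t)"
    using assms by (simp add: thr_def)
  also have "\<dots> + (1 - pq) = (1 - pq) * (xq + xu) / (xq - t)"
    using assms by (simp add: field_simps)
  finally show ?thesis
    using assms by (simp add: num)
qed

lemma exists_in_interval_at_right:
  fixes f :: "real \<Rightarrow> real"
  assumes "a < b" "(f \<longlongrightarrow> l) (at_right a)" "open U" "l \<in> U"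
  shows "\<exists>t\<in>{a<..<b}. f t \<in> U"
proof -
  have "\<forall>\<^sub>F t in at_right a. t \<in> {a<..<b} \<and> f t \<in> U"
    using assms topological_tendstoD[OF assms(2-4)]
    by (auto simp: eventually_conj_iff eventually_at_right_field intro: exI[of _ b])
  then show ?thesis
    using eventually_happens'[OF trivial_limit_at_right_real] by blast
qed

lemma exists_in_interval_at_left:
  fixes f :: "real \<Rightarrow> real"
  assumes "a < b" "(f \<longlongrightarrow> l) (at_left b)" "open U" "l \<in> U"
  shows "\<exists>t\<in>{a<..<b}. f t \<in> U"
proof -
  have "\<forall>\<^sub>F t in at_left b. t \<in> {a<..<b} \<and> f t \<in> U"
    using assms topological_tendstoD[OF assms(2-4)]
    by (auto simp: eventually_conj_iff eventually_at_left_field intro: exI[of _ a])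
  then show ?thesis
    using eventually_happens'[OF trivial_limit_at_left_real] by blast
qed

section \<open>Acceptance regions of a monotone likelihood ratio\<close>

text \<open>
  L, fq, fu are the \<theta>-sections of l, h_q, h_u; posterior p k and acceptance p k are
  s_1 and s_2 at the likelihood-ratio threshold k.
\<close>

locale likelihood_section =
  fixes L fq fu :: "real \<Rightarrow> real"
  assumes integrable_fq: "integrable lborel fq" and integrable_fu: "integrable lborel fu"
    and fq_pos: "\<And>g. 0 < fq g" and fu_pos: "\<And>g. 0 < fu g"
    and L_eq: "\<And>g. L g = fq g / fu g"
    and L_strict_mono: "strict_mono L"
    and L_unbounded: "\<not> bdd_above (range L)"
    and L_Inf: "(INF g. L g) = 0"
begin

definition accepted :: "real \<Rightarrow> real set" where
  "accepted k = {g. k < L g}"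

definition accepted_mass :: "(real \<Rightarrow> real) \<Rightarrow> real \<Rightarrow> real" where
  "accepted_mass F k = (LINT g:accepted k|lborel. F g)"

lemma L_pos: "0 < L g"
  using fq_pos fu_pos by (simp add: L_eq)

lemma L_le_iff: "L a \<le> L b \<longleftrightarrow> a \<le> b"
  using strict_mono_less_eq[OF L_strict_mono] .

lemma accepted_0: "accepted 0 = UNIV"
  using L_pos by (auto simp: accepted_def)

lemma sets_accepted [measurable]: "accepted k \<in> sets borel"
proof -
  have "L \<in> borel_measurable borel"
    using L_strict_mono by (intro borel_measurable_mono strict_mono_mono)
  then have "L -` {k<..} \<inter> space borel \<in> sets borel"
    by measurable
  then show ?thesis
    by (simp add: accepted_def vimage_def)
qed

lemma set_integrable_section:
  fixes F :: "real \<Rightarrow> real"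
  assumes "A \<in> sets lborel" "integrable lborel F"
  shows "set_integrable lborel A F"
  using integrable_mult_indicator[OF assms] by (simp add: set_integrable_def)

lemma emeasure_accepted_nonzero: "emeasure lborel (accepted k) \<noteq> 0"
proof -
  obtain a where "k < L a"
    using L_unbounded by (meson bdd_aboveI2 not_le_imp_less rangeI)
  then have "{a..a + 1} \<subseteq> accepted k"
    by (auto simp: accepted_def intro: less_le_trans[OF _ L_le_iff[THEN iffD2]])
  then have "emeasure lborel {a..a + 1} \<le> emeasure lborel (accepted k)"
    by (intro emeasure_mono) simp_all
  then show ?thesis
    by auto
qed

lemma emeasure_rejected_nonzero:
  assumes "0 < k"
  shows "emeasure lborel (- accepted k) \<noteq> 0"
proof -
  have "bdd_below (range L)"
    using L_pos by (intro bdd_belowI2[of _ 0]) (simp add: less_imp_le)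
  moreover have "(INF g. L g) < k"
    using L_Inf assms by simp
  ultimately obtain b where "L b < k"
    using cInf_lessD[of "range L" k] by auto
  then have "{b - 1..b} \<subseteq> - accepted k"
    using L_le_iff[of _ b] by (force simp: accepted_def)
  then have "emeasure lborel {b - 1..b} \<le> emeasure lborel (- accepted k)"
    by (intro emeasure_mono) simp_all
  then show ?thesis
    by auto
qed

lemma accepted_mass_pos:
  fixes F :: "real \<Rightarrow> real"
  assumes "integrable lborel F" "\<And>g. 0 < F g"
  shows "0 < accepted_mass F k"
  unfolding accepted_mass_def
  using assms by (intro set_integral_pos set_integrable_section emeasure_accepted_nonzero) simp_all

lemma rejected_mass_pos:
  fixes F :: "real \<Rightarrow> real"
  assumes "integrable lborel F" "\<And>g. 0 < F g" "0 < k"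
  shows "0 < (LINT g:- accepted k|lborel. F g)"
  using assms by (intro set_integral_pos set_integrable_section emeasure_rejected_nonzero) simp_all

lemma integral_split_accepted:
  fixes F :: "real \<Rightarrow> real"
  assumes "integrable lborel F"
  shows "integral\<^sup>L lborel F = accepted_mass F k + (LINT g:- accepted k|lborel. F g)"
proof -
  have "integral\<^sup>L lborel F = (LINT g:accepted k \<union> - accepted k|lborel. F g)"
    using set_integral_space[OF assms] by simp
  also have "\<dots> = accepted_mass F k + (LINT g:- accepted k|lborel. F g)"
    unfolding accepted_mass_def using assms
    by (intro set_integral_Un set_integrable_section) simp_all
  finally show ?thesis .
qed

lemma accepted_mass_0:
  fixes F :: "real \<Rightarrow> real"
  assumes "integrable lborel F"
  shows "accepted_mass F 0 = integral\<^sup>L lborel F"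
  using set_integral_space[OF assms] by (simp add: accepted_mass_def accepted_0)

lemma accepted_mass_likelihood_gt: "k * accepted_mass fu k < accepted_mass fq k"
proof -
  have "g \<in> accepted k \<Longrightarrow> 0 < fq g - k * fu g" for g
    using fu_pos[of g] by (simp add: accepted_def L_eq less_divide_eq)
  then have "0 < (LINT g:accepted k|lborel. fq g - k * fu g)"
    using integrable_fq integrable_fu
    by (intro set_integral_pos set_integrable_section emeasure_accepted_nonzero) simp_all
  also have "\<dots> = accepted_mass fq k - k * accepted_mass fu k"
    unfolding accepted_mass_def using integrable_fq integrable_fu
    by (simp add: set_integral_diff set_integrable_section)
  finally show ?thesis
    by simp
qed

lemma rejected_mass_likelihood_le:
  "(LINT g:- accepted k|lborel. fq g) \<le> k * (LINT g:- accepted k|lborel. fu g)"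
proof -
  have "(LINT g:- accepted k|lborel. fq g) \<le> (LINT g:- accepted k|lborel. k * fu g)"
    using integrable_fq integrable_fu fu_pos
    by (intro set_integral_mono set_integrable_section)
      (simp_all add: accepted_def L_eq not_less pos_divide_le_eq)
  then show ?thesis
    by simp
qed

lemma isCont_accepted_mass:
  fixes F :: "real \<Rightarrow> real"
  assumes F: "integrable lborel F"
  shows "isCont (accepted_mass F) k"
proof (rule continuous_at_sequentiallyI)
  fix u :: "nat \<Rightarrow> real"
  assume u: "u \<longlonglongrightarrow> k"
  have "finite (L -` {k})"
    using L_strict_mono by (intro finite_vimageI strict_mono_imp_inj_on) simp_all
  then have "AE g in lborel. g \<notin> L -` {k}"
    by (intro AE_not_in countable_imp_null_set_lborel countable_finite)
  then have "AE g in lborel. (\<lambda>n. indicator (accepted (u n)) g *\<^sub>R F g)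
      \<longlonglongrightarrow> indicator (accepted k) g *\<^sub>R F g"
  proof eventually_elim
    case (elim g)
    \<comment> \<open>off the level set, the indicator of g is eventually constant in n\<close>
    then have "\<forall>\<^sub>F n in sequentially. (u n < L g) = (k < L g)"
      using order_tendstoD[OF u, of "L g"] by (cases "k < L g") (auto elim: eventually_mono)
    then have "\<forall>\<^sub>F n in sequentially.
        indicator (accepted (u n)) g *\<^sub>R F g = indicator (accepted k) g *\<^sub>R F g"
      by eventually_elim (simp add: accepted_def indicator_def)
    then show ?case
      by (rule tendsto_eventually)
  qed
  then show "(\<lambda>n. accepted_mass F (u n)) \<longlonglongrightarrow> accepted_mass F k"
    unfolding accepted_mass_def set_lebesgue_integral_def
    using F by (intro integral_dominated_convergence[where w="\<lambda>g. norm (F g)"])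
      (auto simp: indicator_def)
qed

lemma accepted_mass_at_top:
  fixes F :: "real \<Rightarrow> real"
  assumes F: "integrable lborel F"
  shows "(accepted_mass F \<longlongrightarrow> 0) at_top"
proof -
  have lim: "AE g in lborel. ((\<lambda>k. indicator (accepted k) g *\<^sub>R F g) \<longlongrightarrow> 0) at_top"
  proof (intro AE_I2 tendsto_eventually)
    show "\<forall>\<^sub>F k in at_top. indicator (accepted k) g *\<^sub>R F g = 0" for g
      using eventually_ge_at_top[of "L g"] by eventually_elim (simp add: accepted_def)
  qed
  have bound: "\<forall>\<^sub>F k in at_top. AE g in lborel.
      norm (indicator (accepted k) g *\<^sub>R F g) \<le> norm (F g)"
    by (simp add: indicator_def)
  have "((\<lambda>k. \<integral>g. indicator (accepted k) g *\<^sub>R F g \<partial>lborel)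
      \<longlongrightarrow> integral\<^sup>L lborel (\<lambda>_::real. 0)) at_top"
    by (rule integral_dominated_convergence_at_top[OF _ _ _ lim bound]) (use F in simp_all)
  then show ?thesis
    by (simp add: accepted_mass_def[abs_def] set_lebesgue_integral_def)
qed

definition posterior :: "real \<Rightarrow> real \<Rightarrow> real" where
  "posterior p k = p * accepted_mass fq k / (p * accepted_mass fq k + (1 - p) * accepted_mass fu k)"

definition acceptance :: "real \<Rightarrow> real \<Rightarrow> real" where
  "acceptance p k = (p * accepted_mass fq k + (1 - p) * accepted_mass fu k)
    / (p * integral\<^sup>L lborel fq + (1 - p) * integral\<^sup>L lborel fu)"

lemma accepted_mixture_pos:
  assumes "0 < p" "p < 1"
  shows "0 < p * accepted_mass fq k + (1 - p) * accepted_mass fu k"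
  using assms accepted_mass_pos[OF integrable_fq fq_pos] accepted_mass_pos[OF integrable_fu fu_pos]
  by (simp add: add_pos_pos)

lemma isCont_posterior:
  assumes "0 < p" "p < 1"
  shows "isCont (posterior p) k"
  unfolding posterior_def[abs_def] using accepted_mixture_pos[OF assms, of k]
  by (intro continuous_intros isCont_accepted_mass integrable_fq integrable_fu) simp

lemma isCont_acceptance:
  assumes "0 < p" "p < 1"
  shows "isCont (acceptance p) k"
  unfolding acceptance_def[abs_def] using accepted_mixture_pos[OF assms, of 0]
  by (intro continuous_intros isCont_accepted_mass integrable_fq integrable_fu)
    (simp add: accepted_mass_0 integrable_fq integrable_fu)

lemma acceptance_0:
  assumes "0 < p" "p < 1"
  shows "acceptance p 0 = 1"
  using accepted_mixture_pos[OF assms, of 0]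
  by (simp add: acceptance_def accepted_mass_0 integrable_fq integrable_fu)

lemma acceptance_at_top: "(acceptance p \<longlongrightarrow> 0) at_top"
proof -
  have "((\<lambda>k. p * accepted_mass fq k + (1 - p) * accepted_mass fu k)
      \<longlongrightarrow> p * 0 + (1 - p) * 0) at_top"
    by (intro tendsto_intros accepted_mass_at_top integrable_fq integrable_fu)
  then show ?thesis
    unfolding acceptance_def[abs_def] by (simp add: tendsto_divide_zero)
qed

lemma odds_less_posterior:
  assumes "0 < p" "p < 1" "0 < k"
  shows "p * k / (p * k + (1 - p)) < posterior p k"
proof -
  have "p * (1 - p) * (k * accepted_mass fu k) < p * (1 - p) * accepted_mass fq k"
    using accepted_mass_likelihood_gt[of k] assms by (intro mult_strict_left_mono) simp_all
  then have "p * k * ((1 - p) * accepted_mass fu k) < p * accepted_mass fq k * (1 - p)"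
    by (simp add: ac_simps)
  then show ?thesis
    unfolding posterior_def using assms accepted_mass_pos[OF integrable_fq fq_pos]
      accepted_mass_pos[OF integrable_fu fu_pos]
    by (subst divide_add_less_divide_add_iff) simp_all
qed

lemma posterior_0_less:
  assumes "0 < p" "p < 1" "0 < k"
  shows "posterior p 0 < posterior p k"
proof -
  define Aq Au Rq Ru where "Aq = accepted_mass fq k" and "Au = accepted_mass fu k"
    and "Rq = (LINT g:- accepted k|lborel. fq g)" and "Ru = (LINT g:- accepted k|lborel. fu g)"
  have pos: "0 < Aq" "0 < Au" "0 < Rq" "0 < Ru"
    unfolding Aq_def Au_def Rq_def Ru_def using assms
    by (simp_all add: accepted_mass_pos rejected_mass_pos integrable_fq integrable_fu fq_pos fu_pos)
  have "Rq * Au \<le> k * Ru * Au"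
    using rejected_mass_likelihood_le[of k] pos unfolding Rq_def Ru_def by simp
  also have "\<dots> < Ru * Aq"
    using accepted_mass_likelihood_gt[of k] pos unfolding Aq_def Au_def
    by (simp add: mult.commute mult.left_commute)
  finally have "(Aq + Rq) * Au < Aq * (Au + Ru)"
    by (simp add: algebra_simps)
  then have "p * (1 - p) * ((Aq + Rq) * Au) < p * (1 - p) * (Aq * (Au + Ru))"
    using assms by (intro mult_strict_left_mono) simp_all
  then have "p * (Aq + Rq) * ((1 - p) * Au) < p * Aq * ((1 - p) * (Au + Ru))"
    by (simp add: ac_simps)
  moreover have "accepted_mass fq 0 = Aq + Rq" "accepted_mass fu 0 = Au + Ru"
    unfolding Aq_def Au_def Rq_def Ru_def
    by (simp_all add: accepted_mass_0 integral_split_accepted[symmetric] integrable_fq integrable_fu)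
  ultimately show ?thesis
    unfolding posterior_def Aq_def[symmetric] Au_def[symmetric] using assms pos
    by (subst divide_add_less_divide_add_iff) simp_all
qed

lemma regret_posterior_discontinuous_iff:
  assumes pq: "0 < pq" "pq < 1" and xq: "0 < xq" and xu: "0 < xu"
    and c: "- xu < c" "c < xq" and Q: "Q = 0 \<or> Q = 1"
  shows "(\<exists>t\<in>{-xu<..<xq}. \<not> isCont (\<lambda>t. regret xq xu c Q (posterior pq (thr pq xq xu t))) t)
    \<longleftrightarrow> posterior pq 0 < beta xq xu c"
proof -
  let ?s = "\<lambda>t. posterior pq (thr pq xq xu t)"
  have cont: "isCont ?s t" if "t < xq" for t
    using that pq by (intro isCont_o2[OF isCont_thr isCont_posterior]) simp_all
  have above_0: "posterior pq 0 < ?s t" if "t \<in> {-xu<..<xq}" for t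
    using that pq by (intro posterior_0_less thr_pos) auto
  show ?thesis
  proof
    assume "\<exists>t\<in>{-xu<..<xq}. \<not> isCont (\<lambda>t. regret xq xu c Q (?s t)) t"
    then obtain t where t: "t \<in> {-xu<..<xq}" "\<not> isCont (\<lambda>t. regret xq xu c Q (?s t)) t"
      by blast
    show "posterior pq 0 < beta xq xu c"
    proof (rule ccontr)
      assume "\<not> posterior pq 0 < beta xq xu c"
      then have "?s t \<noteq> beta xq xu c"
        using above_0[OF t(1)] by simp
      then show False
        using isCont_regret_comp[where s = "?s"] cont t xq xu by simp
    qed
  next
    assume "posterior pq 0 < beta xq xu c"
    moreover have "(?s \<longlongrightarrow> posterior pq 0) (at_right (- xu))"
      using cont[of "- xu"] xq xu
      by (simp add: isCont_def filterlim_at_split thr_left_endpoint)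
    ultimately obtain b where b: "b \<in> {-xu<..<xq}" "?s b < beta xq xu c"
      using exists_in_interval_at_right[of "- xu" xq ?s "posterior pq 0" "{..<beta xq xu c}"] xq xu
      by auto
    have "beta xq xu c < ?s c"
      using odds_less_posterior[OF pq thr_pos[OF pq c]] odds_thr[OF pq c(2)] xq xu
      by (simp add: beta_def)
    then show "\<exists>t\<in>{-xu<..<xq}. \<not> isCont (\<lambda>t. regret xq xu c Q (?s t)) t"
      using exists_not_isCont_regret_comp[OF xq xu Q connected_Ioo, where s = "?s" and a = c and b = b]
        b c cont by auto
  qed
qed

lemma regret_acceptance_discontinuous:
  assumes pq: "0 < pq" "pq < 1" and xq: "0 < xq" and xu: "0 < xu"
    and c: "- xu < c" "c < xq" and Q: "Q = 0 \<or> Q = 1"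
  shows "\<exists>t\<in>{-xu<..<xq}. \<not> isCont (\<lambda>t. regret xq xu c Q (acceptance pq (thr pq xq xu t))) t"
proof -
  let ?s = "\<lambda>t. acceptance pq (thr pq xq xu t)"
  have cont: "isCont ?s t" if "t < xq" for t
    using that pq by (intro isCont_o2[OF isCont_thr isCont_acceptance]) simp_all
  have beta: "0 < beta xq xu c" "beta xq xu c < 1"
    using xq xu c by (simp_all add: beta_def)
  have "(?s \<longlongrightarrow> 1) (at_right (- xu))"
    using cont[of "- xu"] xq xu pq
    by (simp add: isCont_def filterlim_at_split thr_left_endpoint acceptance_0)
  then obtain a where a: "a \<in> {-xu<..<xq}" "beta xq xu c < ?s a"
    using exists_in_interval_at_right[of "- xu" xq ?s 1 "{beta xq xu c<..}"] xq xu beta by auto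
  have "(?s \<longlongrightarrow> 0) (at_left xq)"
    using filterlim_compose[OF acceptance_at_top filterlim_thr_at_left] pq xq xu by simp
  then obtain b where b: "b \<in> {-xu<..<xq}" "?s b < beta xq xu c"
    using exists_in_interval_at_left[of "- xu" xq ?s 0 "{..<beta xq xu c}"] xq xu beta by auto
  show ?thesis
    using exists_not_isCont_regret_comp[OF xq xu Q connected_Ioo, where s = "?s" and a = a and b = b]
      a b cont by auto
qed

end

theorem mainTheorem8:
  fixes pq xq xu c theta Q :: real
    and hq hu :: "real \<times> real \<Rightarrow> real"
  assumes prior: "0 < pq" "pq < 1"
    and pay: "0 < xq" "0 < xu"
    and cut: "- xu < c" "c < xq"
    and Q: "Q = 0 \<or> Q = 1"
    and pos: "\<And>p. 0 < hq p" "\<And>p. 0 < hu p"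
    and meas: "hq \<in> borel_measurable borel" "hu \<in> borel_measurable borel"
    and dens: "integrable lborel hq" "integral\<^sup>L lborel hq = 1"
              "integrable lborel hu" "integral\<^sup>L lborel hu = 1"
    and lcont: "continuous_on UNIV (lr hq hu)"
    and lmono1: "\<And>g. strict_mono (\<lambda>t. lr hq hu (t, g))"
    and lmono2: "\<And>t. strict_mono (\<lambda>g. lr hq hu (t, g))"
    and linf: "\<And>t. (INF g. lr hq hu (t, g)) = 0"
    and lsup: "\<And>t. \<not> bdd_above (range (\<lambda>g. lr hq hu (t, g)))"
    and sect: "integrable lborel (\<lambda>g. hq (theta, g))" "integrable lborel (\<lambda>g. hu (theta, g))"
  shows "((\<exists>t\<in>{-xu<..<xq}. \<not> isCont (\<lambda>t. regret xq xu c Q (s1 pq hq hu xq xu theta t)) t)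
           \<longleftrightarrow> phi pq hq hu theta < beta xq xu c)
       \<and> (\<exists>t\<in>{-xu<..<xq}. \<not> isCont (\<lambda>t. regret xq xu c Q (s2 pq hq hu xq xu theta t)) t)"
proof -
  \<comment> \<open>only the \<theta>-section of the model matters\<close>
  interpret likelihood_section "\<lambda>g. lr hq hu (theta, g)" "\<lambda>g. hq (theta, g)" "\<lambda>g. hu (theta, g)"
    using sect pos lmono2 lsup linf by unfold_locales (simp_all add: lr_def)
  have "s1 pq hq hu xq xu theta = (\<lambda>t. posterior pq (thr pq xq xu t))"
    by (simp add: fun_eq_iff s1_def posterior_def accepted_mass_def accepted_def acc_mass_def
        set_lebesgue_integral_def Let_def)
  moreover have "s2 pq hq hu xq xu theta = (\<lambda>t. acceptance pq (thr pq xq xu t))"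
    by (simp add: fun_eq_iff s2_def acceptance_def accepted_mass_def accepted_def acc_mass_def
        set_lebesgue_integral_def marg_def Let_def)
  moreover have "phi pq hq hu theta = posterior pq 0"
    by (simp add: phi_def marg_def posterior_def accepted_mass_0 sect)
  ultimately show ?thesis
    using regret_posterior_discontinuous_iff[OF prior pay cut Q]
      regret_acceptance_discontinuous[OF prior pay cut Q]
    by simp
qed

end
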